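(* For every integer $t\ge 14$, every graph $K_{3,t}^+$ belongs to $\mathcal{S}_3$.
   Context: Graphs may have parallel edges but no loops. For an integer $t\ge4$, $K_{3,t}^+$ denotes any $4$-edge-connected graph on $t+3$ vertices that contains the complete bipartite graph $K_{3,t}$ as a spanning subgraph. $G\in\mathcal{S}_3$ means: for every $\beta:V(G)\to\mathbb{Z}_3$ with $\sum_v\beta(v)\equiv0\pmod3$ there is a strongly-connected orientation $D$ of $G$ with $d^+_D(v)-d^-_D(v)\equiv\beta(v)\pmod3$ for all $v$. *)

theory Defs
  imports Main
begin

text \<open>A loopless multigraph: vertex set V, edge set E (edge identifiers, so parallel
edges are allowed), and an endpoint map giving each edge a reference pair of
distinct endpoints (the reference direction is arbitrary).\<close>

definition multigraph :: "'a set \<Rightarrow> 'e set \<Rightarrow> ('e \<Rightarrow> 'a \<times> 'a) \<Rightarrow> bool" where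
  "multigraph V E ends \<longleftrightarrow> finite V \<and> finite E \<and>
     (\<forall>e\<in>E. fst (ends e) \<in> V \<and> snd (ends e) \<in> V \<and> fst (ends e) \<noteq> snd (ends e))"

definition ug_rel :: "'e set \<Rightarrow> ('e \<Rightarrow> 'a \<times> 'a) \<Rightarrow> ('a \<times> 'a) set" where
  "ug_rel E ends = {(u, v). \<exists>e\<in>E. ends e = (u, v) \<or> ends e = (v, u)}"

definition connected_mg :: "'a set \<Rightarrow> 'e set \<Rightarrow> ('e \<Rightarrow> 'a \<times> 'a) \<Rightarrow> bool" where
  "connected_mg V E ends \<longleftrightarrow> (\<forall>u\<in>V. \<forall>v\<in>V. (u, v) \<in> (ug_rel E ends)\<^sup>*)"

definition edge_connected :: "nat \<Rightarrow> 'a set \<Rightarrow> 'e set \<Rightarrow> ('e \<Rightarrow> 'a \<times> 'a) \<Rightarrow> bool" where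
  "edge_connected k V E ends \<longleftrightarrow> 2 \<le> card V \<and>
     (\<forall>F. F \<subseteq> E \<and> card F < k \<longrightarrow> connected_mg V (E - F) ends)"

definition contains_spanning_K3t :: "nat \<Rightarrow> 'a set \<Rightarrow> 'e set \<Rightarrow> ('e \<Rightarrow> 'a \<times> 'a) \<Rightarrow> bool" where
  "contains_spanning_K3t t V E ends \<longleftrightarrow> (\<exists>A B. A \<inter> B = {} \<and> A \<union> B = V \<and> card A = 3 \<and> card B = t \<and>
     (\<forall>a\<in>A. \<forall>b\<in>B. \<exists>e\<in>E. ends e = (a, b) \<or> ends e = (b, a)))"

definition is_K3t_plus :: "nat \<Rightarrow> 'a set \<Rightarrow> 'e set \<Rightarrow> ('e \<Rightarrow> 'a \<times> 'a) \<Rightarrow> bool" where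
  "is_K3t_plus t V E ends \<longleftrightarrow> multigraph V E ends \<and> card V = t + 3 \<and>
     edge_connected 4 V E ends \<and> contains_spanning_K3t t V E ends"

text \<open>An orientation D: D e = True keeps the reference direction of e, False reverses it.\<close>
definition tail :: "('e \<Rightarrow> 'a \<times> 'a) \<Rightarrow> ('e \<Rightarrow> bool) \<Rightarrow> 'e \<Rightarrow> 'a" where
  "tail ends D e = (if D e then fst (ends e) else snd (ends e))"

definition head :: "('e \<Rightarrow> 'a \<times> 'a) \<Rightarrow> ('e \<Rightarrow> bool) \<Rightarrow> 'e \<Rightarrow> 'a" where
  "head ends D e = (if D e then snd (ends e) else fst (ends e))"

definition arcs :: "'e set \<Rightarrow> ('e \<Rightarrow> 'a \<times> 'a) \<Rightarrow> ('e \<Rightarrow> bool) \<Rightarrow> ('a \<times> 'a) set" where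
  "arcs E ends D = {(tail ends D e, head ends D e) | e. e \<in> E}"

definition strongly_connected_orient :: "'a set \<Rightarrow> 'e set \<Rightarrow> ('e \<Rightarrow> 'a \<times> 'a) \<Rightarrow> ('e \<Rightarrow> bool) \<Rightarrow> bool" where
  "strongly_connected_orient V E ends D \<longleftrightarrow> (\<forall>u\<in>V. \<forall>v\<in>V. (u, v) \<in> (arcs E ends D)\<^sup>*)"

definition outdeg :: "'e set \<Rightarrow> ('e \<Rightarrow> 'a \<times> 'a) \<Rightarrow> ('e \<Rightarrow> bool) \<Rightarrow> 'a \<Rightarrow> nat" where
  "outdeg E ends D v = card {e\<in>E. tail ends D e = v}"

definition indeg :: "'e set \<Rightarrow> ('e \<Rightarrow> 'a \<times> 'a) \<Rightarrow> ('e \<Rightarrow> bool) \<Rightarrow> 'a \<Rightarrow> nat" where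
  "indeg E ends D v = card {e\<in>E. head ends D e = v}"

text \<open>G \<in> S_3: every zero-sum Z_3-boundary beta (represented by integers, taken mod 3)
is realised by a strongly connected orientation.\<close>
definition in_S3 :: "'a set \<Rightarrow> 'e set \<Rightarrow> ('e \<Rightarrow> 'a \<times> 'a) \<Rightarrow> bool" where
  "in_S3 V E ends \<longleftrightarrow> (\<forall>\<beta> :: 'a \<Rightarrow> int. (\<Sum>v\<in>V. \<beta> v) mod 3 = 0 \<longrightarrow>
     (\<exists>D. strongly_connected_orient V E ends D \<and>
        (\<forall>v\<in>V. (int (outdeg E ends D v) - int (indeg E ends D v)) mod 3 = \<beta> v mod 3)))"

end

theory Submission
  imports Defs
begin

(*
  Fix a spanning K_{3,t} with sides A = {a0, a1, a2} and B, one edge for each pair, and call the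
  other edges the remaining edges. Orient the remaining edges so that the number of unbalanced
  vertices b in B, those where beta(b) minus the net out-degree on the remaining edges is nonzero
  mod 3, is maximal. Each b in B has a remaining edge (degree at least 4), and maximality forces
  the remaining neighbours of balanced vertices to be unbalanced and pairwise distinct, so at least
  t/2 >= 7 vertices of B are unbalanced.
  The three star edges at b then repair its residue: for unbalanced b the edge to a distinguished
  neighbour in A points against the other two (net +-1), for balanced b all three point the same
  way (net +-3), opposite to a remaining edge at b. Two or three unbalanced vertices with suitable
  distinguished neighbours connect A strongly, and through them the whole orientation is strongly
  connected. Four more unbalanced vertices adjust the residues at a0 and a1 by moving their
  distinguished neighbours; the residue at a2 is then forced, as net out-degrees sum to 0 and
  beta sums to 0 mod 3.
*)

definition net_out :: "('e \<Rightarrow> 'a \<times> 'a) \<Rightarrow> ('e \<Rightarrow> bool) \<Rightarrow> 'a \<Rightarrow> 'e \<Rightarrow> int" where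
  "net_out ends D v e = (if tail ends D e = v then 1 else 0) - (if head ends D e = v then 1 else 0)"

definition net_outdeg :: "'e set \<Rightarrow> ('e \<Rightarrow> 'a \<times> 'a) \<Rightarrow> ('e \<Rightarrow> bool) \<Rightarrow> 'a \<Rightarrow> int" where
  "net_outdeg E ends D v = (\<Sum>e\<in>E. net_out ends D v e)"

lemma net_outdeg_eq_outdeg_minus_indeg:
  "finite E \<Longrightarrow> net_outdeg E ends D v = int (outdeg E ends D v) - int (indeg E ends D v)"
  unfolding net_outdeg_def net_out_def outdeg_def indeg_def
  by (simp add: sum_subtractf flip: sum.inter_filter)

lemma sum_net_outdeg_eq_0:
  assumes "multigraph V E ends"
  shows "(\<Sum>v\<in>V. net_outdeg E ends D v) = 0"
proof -
  have "(\<Sum>v\<in>V. net_outdeg E ends D v) = (\<Sum>e\<in>E. \<Sum>v\<in>V. net_out ends D v e)"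
    unfolding net_outdeg_def by (rule sum.swap)
  also have "\<dots> = 0"
    using assms unfolding multigraph_def net_out_def tail_def head_def
    by (intro sum.neutral) (simp add: sum_subtractf)
  finally show ?thesis .
qed

lemma net_out_flip: "net_out ends (D(e := \<not> D e)) v e = - net_out ends D v e"
  unfolding net_out_def tail_def head_def by auto

lemma net_out_upd_other: "e' \<noteq> e \<Longrightarrow> net_out ends (D(e := x)) v e' = net_out ends D v e'"
  unfolding net_out_def tail_def head_def by auto

lemma net_out_not_incident:
  "fst (ends e) \<noteq> v \<Longrightarrow> snd (ends e) \<noteq> v \<Longrightarrow> net_out ends D v e = 0"
  unfolding net_out_def tail_def head_def by auto

lemma net_out_incident:
  "fst (ends e) \<noteq> snd (ends e) \<Longrightarrow> fst (ends e) = v \<or> snd (ends e) = v \<Longrightarrow>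
    net_out ends D v e = 1 \<or> net_out ends D v e = -1"
  unfolding net_out_def tail_def head_def by auto

lemma net_outdeg_flip:
  assumes "finite E" "e \<in> E"
  shows "net_outdeg E ends (D(e := \<not> D e)) v = net_outdeg E ends D v - 2 * net_out ends D v e"
proof -
  have "(\<Sum>e'\<in>E - {e}. net_out ends (D(e := \<not> D e)) v e') = (\<Sum>e'\<in>E - {e}. net_out ends D v e')"
    by (intro sum.cong) (auto simp: net_out_upd_other)
  then show ?thesis
    unfolding net_outdeg_def
    using sum.remove[OF assms, of "net_out ends (D(e := \<not> D e)) v"] sum.remove[OF assms, of "net_out ends D v"]
      net_out_flip[of ends D e v]
    by simp
qed

lemma degree_ge_if_edge_connected:
  assumes ec: "edge_connected k V E ends" and v: "v \<in> V"
  shows "k \<le> card {e\<in>E. fst (ends e) = v \<or> snd (ends e) = v}" (is "_ \<le> card ?S")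
proof (rule ccontr)
  assume "\<not> k \<le> card ?S"
  then have "connected_mg V (E - ?S) ends"
    using ec unfolding edge_connected_def by auto
  moreover obtain u where u: "u \<in> V" "u \<noteq> v"
  proof -
    have "\<not> V \<subseteq> {v}" using ec card_mono[of "{v}" V] unfolding edge_connected_def by auto
    then show thesis using that by blast
  qed
  ultimately have "(v, u) \<in> (ug_rel (E - ?S) ends)\<^sup>*"
    using v unfolding connected_mg_def by blast
  then show False
    using u(2) by (cases rule: converse_rtranclE) (auto simp: ug_rel_def)
qed

lemma exists_signs_sum_mod3:
  fixes d s1 s2 :: int
  assumes "s1 = 1 \<or> s1 = -1" "s2 = 1 \<or> s2 = -1"
  shows "\<exists>g1 g2. (d + (if g1 then s1 else - s1) + (if g2 then s2 else - s2)) mod 3 = 0"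
  unfolding ex_bool_eq using assms by (elim disjE) (simp; presburger)+

lemma mod3_add_double_unit:
  fixes r s :: int
  shows "r mod 3 = 0 \<Longrightarrow> s = 1 \<or> s = -1 \<Longrightarrow> (r + 2 * s) mod 3 \<noteq> 0"
  by presburger

lemma mod3_add_double_units:
  fixes r s1 s2 :: int
  assumes "r mod 3 \<noteq> 0" "(r + 2 * s1) mod 3 = 0" "(r + 2 * s2) mod 3 = 0"
    "s1 = 1 \<or> s1 = -1" "s2 = 1 \<or> s2 = -1"
  shows "(r + 2 * s1 + 2 * s2) mod 3 \<noteq> 0"
  using assms by presburger

lemma mod3_unit_correction:
  fixes r x :: int
  shows "r mod 3 \<noteq> 0 \<Longrightarrow> (x - r + (if r mod 3 = 1 then 1 else -1)) mod 3 = x mod 3"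
  by presburger

lemma mod3_zero_correction:
  fixes r x c :: int
  shows "r mod 3 = 0 \<Longrightarrow> (x - r - 3 * c) mod 3 = x mod 3"
  by presburger

lemma obtain_4_distinct:
  assumes "4 \<le> card S"
  obtains c1 c2 c3 c4 where "{c1, c2, c3, c4} \<subseteq> S" "distinct [c1, c2, c3, c4]"
proof -
  obtain T where T: "T \<subseteq> S" "card T = 4" using obtain_subset_with_card_n[OF assms] by blast
  then obtain c1 c2 c3 c4 where "T = {c1, c2, c3, c4}" "distinct [c1, c2, c3, c4]"
    by (auto simp: numeral_eq_Suc card_Suc_eq)
  then show thesis using T that by blast
qed

locale K3t_boundary =
  fixes V :: "'a set" and E :: "'e set" and ends :: "'e \<Rightarrow> 'a \<times> 'a"
    and A B :: "'a set" and a0 a1 a2 :: 'a and \<beta> :: "'a \<Rightarrow> int"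
  assumes multigraph: "multigraph V E ends"
    and degree_B: "\<And>b. b \<in> B \<Longrightarrow> 4 \<le> card {e\<in>E. fst (ends e) = b \<or> snd (ends e) = b}"
    and A_eq: "A = {a0, a1, a2}" and distinct_A: "distinct [a0, a1, a2]"
    and disjoint_A_B: "A \<inter> B = {}" and Un_A_B: "A \<union> B = V" and card_B: "14 \<le> card B"
    and complete_A_B: "\<And>a b. a \<in> A \<Longrightarrow> b \<in> B \<Longrightarrow> \<exists>e\<in>E. ends e = (a, b) \<or> ends e = (b, a)"
    and sum_\<beta>: "(\<Sum>v\<in>V. \<beta> v) mod 3 = 0"
begin

lemma finite_E: "finite E" and finite_V: "finite V"
  using multigraph unfolding multigraph_def by auto

lemma finite_B: "finite B"
  using finite_V Un_A_B by auto

lemma ends_E: "e \<in> E \<Longrightarrow> fst (ends e) \<in> V \<and> snd (ends e) \<in> V \<and> fst (ends e) \<noteq> snd (ends e)"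
  using multigraph unfolding multigraph_def by auto

lemma A_neq_B: "a \<in> A \<Longrightarrow> b \<in> B \<Longrightarrow> a \<noteq> b"
  using disjoint_A_B by auto

lemma in_A: "a0 \<in> A" "a1 \<in> A" "a2 \<in> A"
  using A_eq by auto

lemma finite_A: "finite A"
  using A_eq by simp

lemma card_A: "card A = 3"
  using A_eq distinct_A by simp

lemma sum_A: "(\<Sum>a\<in>A. f a) = f a0 + f a1 + f a2"
  using A_eq distinct_A by (simp add: add.assoc)

definition star_edge :: "'a \<Rightarrow> 'a \<Rightarrow> 'e" where
  "star_edge b a = (SOME e. e \<in> E \<and> (ends e = (a, b) \<or> ends e = (b, a)))"

lemma star_edge:
  assumes "a \<in> A" "b \<in> B"
  shows "star_edge b a \<in> E \<and> (ends (star_edge b a) = (a, b) \<or> ends (star_edge b a) = (b, a))"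
  unfolding star_edge_def using complete_A_B[OF assms] by (rule someI2_bex) blast

lemma inj_on_star_edge: "inj_on (\<lambda>(b, a). star_edge b a) (B \<times> A)"
proof (rule inj_onI, clarify)
  fix b a b' a' assume in_AB: "b \<in> B" "a \<in> A" "b' \<in> B" "a' \<in> A" and eq: "star_edge b a = star_edge b' a'"
  have "ends (star_edge b a) = (a, b) \<or> ends (star_edge b a) = (b, a)"
    and "ends (star_edge b a) = (a', b') \<or> ends (star_edge b a) = (b', a')"
    using star_edge[of a b] star_edge[of a' b'] in_AB eq by auto
  with A_neq_B[of a b'] A_neq_B[of a' b] in_AB show "b = b' \<and> a = a'"
    by (metis prod.inject)
qed

definition star_edges :: "'e set" where
  "star_edges = (\<lambda>(b, a). star_edge b a) ` (B \<times> A)"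

definition rest_edges :: "'e set" where
  "rest_edges = E - star_edges"

lemma star_edges_subset: "star_edges \<subseteq> E"
  unfolding star_edges_def by (auto intro: star_edge[THEN conjunct1])

lemma finite_rest_edges: "finite rest_edges"
  unfolding rest_edges_def using finite_E by simp

definition incident :: "'a \<Rightarrow> 'e \<Rightarrow> bool" where
  "incident v e \<longleftrightarrow> fst (ends e) = v \<or> snd (ends e) = v"

definition other_end :: "'a \<Rightarrow> 'e \<Rightarrow> 'a" where
  "other_end v e = (if fst (ends e) = v then snd (ends e) else fst (ends e))"

lemma incident_ends: "incident v e \<Longrightarrow> ends e = (v, other_end v e) \<or> ends e = (other_end v e, v)"
  unfolding incident_def other_end_def by (cases "ends e") auto

lemma net_out_incident_E:
  "e \<in> E \<Longrightarrow> incident v e \<Longrightarrow> net_out ends D v e = 1 \<or> net_out ends D v e = -1"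
  using net_out_incident[of ends e v D] ends_E[of e] unfolding incident_def by simp

lemma net_out_not_incident_E: "\<not> incident v e \<Longrightarrow> net_out ends D v e = 0"
  using net_out_not_incident[of ends e v D] unfolding incident_def by simp

text \<open>Only three of the at least four edges at a vertex of B are star edges.\<close>

lemma rest_edge_at_B:
  assumes b: "b \<in> B"
  shows "\<exists>e\<in>rest_edges. incident b e"
proof -
  let ?S = "{e\<in>E. incident b e}" and ?T = "(\<lambda>a. star_edge b a) ` A"
  have "card ?T \<le> 3"
    using card_image_le[of A "\<lambda>a. star_edge b a"] finite_A card_A by simp
  moreover have "4 \<le> card ?S"
    using degree_B[OF b] unfolding incident_def by simp
  ultimately have "\<not> ?S \<subseteq> ?T"
    using card_mono[of ?T ?S] finite_A by fastforce
  then obtain e where e: "e \<in> E" "incident b e" "e \<notin> ?T"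
    by blast
  have "e \<notin> star_edges"
  proof
    assume "e \<in> star_edges"
    then obtain b' a where in_AB: "b' \<in> B" "a \<in> A" and e_eq: "e = star_edge b' a"
      unfolding star_edges_def by auto
    then have "ends e = (a, b') \<or> ends e = (b', a)"
      using star_edge by blast
    moreover have "a \<noteq> b"
      using A_neq_B in_AB b by blast
    ultimately have "b' = b"
      using e(2) unfolding incident_def by auto
    with e(3) in_AB e_eq show False by blast
  qed
  with e show ?thesis unfolding rest_edges_def by blast
qed

subsection \<open>Orientations of the remaining edges maximising the unbalanced vertices\<close>

abbreviation rest_net :: "('e \<Rightarrow> bool) \<Rightarrow> 'a \<Rightarrow> int" where
  "rest_net D \<equiv> net_outdeg rest_edges ends D"

definition unbalanced :: "('e \<Rightarrow> bool) \<Rightarrow> 'a set" where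
  "unbalanced D = {b\<in>B. (\<beta> b - rest_net D b) mod 3 \<noteq> 0}"

definition max_unbalanced :: "('e \<Rightarrow> bool) \<Rightarrow> bool" where
  "max_unbalanced D \<longleftrightarrow> (\<forall>D'. card (unbalanced D') \<le> card (unbalanced D))"

lemma unbalanced_subset: "unbalanced D \<subseteq> B"
  unfolding unbalanced_def by auto

lemma finite_unbalanced: "finite (unbalanced D)"
  using finite_B unbalanced_subset by (rule finite_subset[rotated])

lemma exists_max_unbalanced: "\<exists>D. max_unbalanced D"
proof -
  have "card (unbalanced D) < Suc (card B)" for D
    using card_mono[OF finite_B unbalanced_subset] by (simp add: le_imp_less_Suc)
  then show ?thesis
    unfolding max_unbalanced_def
    using ex_has_greatest_nat[of "\<lambda>_. True" undefined "\<lambda>D. card (unbalanced D)" "Suc (card B)"] by blast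
qed

lemma max_unbalanced_no_growth:
  assumes "max_unbalanced D" "z \<in> B - unbalanced D" "insert z (unbalanced D) \<subseteq> unbalanced D'"
  shows False
proof -
  have "Suc (card (unbalanced D)) \<le> card (unbalanced D')"
    using card_mono[OF finite_unbalanced assms(3)] finite_unbalanced assms(2) by simp
  with assms(1) show False unfolding max_unbalanced_def by (metis not_less_eq_eq)
qed

lemma residue_flip:
  "e \<in> rest_edges \<Longrightarrow>
    \<beta> v - rest_net (D(e := \<not> D e)) v = (\<beta> v - rest_net D v) + 2 * net_out ends D v e"
  using net_outdeg_flip[OF finite_rest_edges, of e ends D v] by simp

lemma rest_edge_E: "e \<in> rest_edges \<Longrightarrow> e \<in> E"
  unfolding rest_edges_def by simp

lemma unbalanced_flip_not_incident:
  "e \<in> rest_edges \<Longrightarrow> \<not> incident b e \<Longrightarrow> b \<in> unbalanced (D(e := \<not> D e)) \<longleftrightarrow> b \<in> unbalanced D"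
  unfolding unbalanced_def residue_flip by (simp add: net_out_not_incident_E)

lemma balanced_flip_incident:
  assumes "e \<in> rest_edges" "incident z e" "z \<in> B - unbalanced D"
  shows "z \<in> unbalanced (D(e := \<not> D e))"
  using assms net_out_incident_E[OF rest_edge_E] mod3_add_double_unit
  unfolding unbalanced_def residue_flip[OF assms(1)] by auto

text \<open>Flipping a remaining edge at a balanced vertex z makes z unbalanced; by maximality the
  other end must have been unbalanced and must become balanced.\<close>

lemma balanced_rest_neighbour:
  assumes max: "max_unbalanced D" and z: "z \<in> B - unbalanced D"
    and e: "e \<in> rest_edges" "incident z e"
  shows "other_end z e \<in> unbalanced D \<and> other_end z e \<notin> unbalanced (D(e := \<not> D e))"
proof (rule ccontr)
  let ?w = "other_end z e" and ?D = "D(e := \<not> D e)"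
  assume w: "\<not> (?w \<in> unbalanced D \<and> ?w \<notin> unbalanced ?D)"
  have "b \<in> unbalanced ?D" if "b \<in> unbalanced D" "b \<noteq> ?w" "b \<noteq> z" for b
  proof -
    have "\<not> incident b e"
      using incident_ends[OF e(2)] that(2,3) unfolding incident_def by auto
    with that(1) show ?thesis
      using unbalanced_flip_not_incident[OF e(1)] by blast
  qed
  with w balanced_flip_incident[OF e z] have "insert z (unbalanced D) \<subseteq> unbalanced ?D"
    by blast
  then show False
    using max_unbalanced_no_growth[OF max z] by blast
qed

text \<open>If two balanced vertices shared the neighbour w, flipping both edges would change the residue
  of w twice by the same nonzero amount, keeping w unbalanced while making z1 unbalanced.\<close>

lemma balanced_rest_neighbour_inj:
  assumes max: "max_unbalanced D" and z1: "z1 \<in> B - unbalanced D" and z2: "z2 \<in> B - unbalanced D"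
    and e1: "e1 \<in> rest_edges" "incident z1 e1" and e2: "e2 \<in> rest_edges" "incident z2 e2"
    and w: "other_end z1 e1 = other_end z2 e2"
  shows "z1 = z2"
proof (rule ccontr)
  assume "z1 \<noteq> z2"
  define w where "w = other_end z1 e1"
  define D1 where "D1 = D(e1 := \<not> D e1)"
  define D2 where "D2 = D1(e2 := \<not> D1 e2)"
  have w1: "w \<in> unbalanced D" "w \<notin> unbalanced D1"
    using balanced_rest_neighbour[OF max z1 e1] unfolding w_def D1_def by auto
  have w2: "w \<notin> unbalanced (D(e2 := \<not> D e2))"
    using balanced_rest_neighbour[OF max z2 e2] unfolding w_def w by auto
  have ends1: "ends e1 = (z1, w) \<or> ends e1 = (w, z1)" and ends2: "ends e2 = (z2, w) \<or> ends e2 = (w, z2)"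
    using incident_ends[OF e1(2)] incident_ends[OF e2(2)] unfolding w_def w by auto
  have "w \<noteq> z1"
    using w1 z1 by auto
  with ends1 ends2 \<open>z1 \<noteq> z2\<close> have "e1 \<noteq> e2" "\<not> incident z1 e2" "incident w e1" "incident w e2"
    unfolding incident_def by auto
  then have net_out_w: "net_out ends D1 w e2 = net_out ends D w e2"
    "net_out ends D w e1 = 1 \<or> net_out ends D w e1 = -1" "net_out ends D w e2 = 1 \<or> net_out ends D w e2 = -1"
    using net_out_incident_E[OF rest_edge_E[OF e1(1)]] net_out_incident_E[OF rest_edge_E[OF e2(1)]]
    unfolding D1_def by (auto simp: net_out_upd_other)
  have "w \<in> B"
    using w1(1) unbalanced_subset by blast
  have "\<beta> w - rest_net D2 w = (\<beta> w - rest_net D1 w) + 2 * net_out ends D1 w e2"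
    unfolding D2_def by (rule residue_flip[OF e2(1)])
  also have "\<beta> w - rest_net D1 w = (\<beta> w - rest_net D w) + 2 * net_out ends D w e1"
    unfolding D1_def by (rule residue_flip[OF e1(1)])
  finally have residue_D2:
    "\<beta> w - rest_net D2 w = (\<beta> w - rest_net D w) + 2 * net_out ends D w e1 + 2 * net_out ends D w e2"
    using net_out_w(1) by simp
  have "(\<beta> w - rest_net D w) mod 3 \<noteq> 0"
    using w1(1) unfolding unbalanced_def by simp
  moreover have "(\<beta> w - rest_net D w + 2 * net_out ends D w e1) mod 3 = 0"
    using w1(2) \<open>w \<in> B\<close> unfolding unbalanced_def D1_def residue_flip[OF e1(1)] by simp
  moreover have "(\<beta> w - rest_net D w + 2 * net_out ends D w e2) mod 3 = 0"
    using w2 \<open>w \<in> B\<close> unfolding unbalanced_def residue_flip[OF e2(1)] by simp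
  ultimately have "(\<beta> w - rest_net D2 w) mod 3 \<noteq> 0"
    unfolding residue_D2 by (rule mod3_add_double_units[OF _ _ _ net_out_w(2,3)])
  then have "w \<in> unbalanced D2"
    using \<open>w \<in> B\<close> unfolding unbalanced_def by simp
  moreover have "z1 \<in> unbalanced D2"
    using balanced_flip_incident[OF e1 z1] unbalanced_flip_not_incident[OF e2(1) \<open>\<not> incident z1 e2\<close>]
    unfolding D2_def D1_def by blast
  moreover have "b \<in> unbalanced D2" if "b \<in> unbalanced D" "b \<noteq> w" "b \<noteq> z1" for b
  proof -
    have "b \<noteq> z2"
      using that(1) z2 by auto
    then have "\<not> incident b e1" "\<not> incident b e2"
      using ends1 ends2 that(2,3) unfolding incident_def by auto
    with that(1) show ?thesis
      using unbalanced_flip_not_incident[OF e1(1)] unbalanced_flip_not_incident[OF e2(1)]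
      unfolding D2_def D1_def by blast
  qed
  ultimately have "insert z1 (unbalanced D) \<subseteq> unbalanced D2"
    by blast
  then show False
    using max_unbalanced_no_growth[OF max z1] by blast
qed

lemma card_B_le_twice_unbalanced:
  assumes max: "max_unbalanced D"
  shows "card B \<le> 2 * card (unbalanced D)"
proof -
  define f where "f z = other_end z (SOME e. e \<in> rest_edges \<and> incident z e)" for z
  have f: "(SOME e. e \<in> rest_edges \<and> incident z e) \<in> rest_edges \<and> incident z (SOME e. e \<in> rest_edges \<and> incident z e)"
    if "z \<in> B" for z
    using rest_edge_at_B[OF that] by (rule someI2_bex) blast
  have "inj_on f (B - unbalanced D)"
    unfolding inj_on_def f_def using balanced_rest_neighbour_inj[OF max] f by blast
  moreover have "f ` (B - unbalanced D) \<subseteq> unbalanced D"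
    unfolding f_def using balanced_rest_neighbour[OF max] f by blast
  ultimately have "card (B - unbalanced D) \<le> card (unbalanced D)"
    using card_inj_on_le finite_unbalanced by blast
  moreover have "card B = card (B - unbalanced D) + card (unbalanced D)"
    using card_Diff_subset[OF finite_unbalanced unbalanced_subset] card_mono[OF finite_B unbalanced_subset] by simp
  ultimately show ?thesis by simp
qed

subsection \<open>Orienting the star edges\<close>

definition residue_sign :: "('e \<Rightarrow> bool) \<Rightarrow> 'a \<Rightarrow> int" where
  "residue_sign D b = (if (\<beta> b - rest_net D b) mod 3 = 1 then 1 else -1)"

text \<open>Here s is the distinguished star neighbour of b. An unbalanced b of residue 1 sends its star
  edges to the two other vertices of A and receives the one from s (net out-degree 1); for
  residue 2 all three directions are reversed (net out-degree -1). A balanced b directs all three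
  star edges the same way (net out-degree \<open>\<plusminus>3\<close>), outwards iff some remaining edge enters b.\<close>

definition star_out :: "('e \<Rightarrow> bool) \<Rightarrow> 'a \<Rightarrow> 'a \<Rightarrow> 'a \<Rightarrow> bool" where
  "star_out D b s a \<longleftrightarrow>
     (if b \<in> unbalanced D then (residue_sign D b = 1 \<longleftrightarrow> a \<noteq> s)
      else (\<exists>e\<in>rest_edges. head ends D e = b))"

definition B_end :: "'e \<Rightarrow> 'a" where
  "B_end e = (if fst (ends e) \<in> B then fst (ends e) else snd (ends e))"

definition A_end :: "'e \<Rightarrow> 'a" where
  "A_end e = (if fst (ends e) \<in> B then snd (ends e) else fst (ends e))"

definition orient :: "('e \<Rightarrow> bool) \<Rightarrow> ('a \<Rightarrow> 'a) \<Rightarrow> 'e \<Rightarrow> bool" where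
  "orient D s e =
     (if e \<in> star_edges then (fst (ends e) \<in> B \<longleftrightarrow> star_out D (B_end e) (s (B_end e)) (A_end e))
      else D e)"

abbreviation net :: "('e \<Rightarrow> bool) \<Rightarrow> ('a \<Rightarrow> 'a) \<Rightarrow> 'a \<Rightarrow> int" where
  "net D s \<equiv> net_outdeg E ends (orient D s)"

lemma orient_rest_edges: "e \<in> rest_edges \<Longrightarrow> orient D s e = D e"
  unfolding orient_def rest_edges_def by simp

lemma arc_star_edge:
  assumes b: "b \<in> B" and a: "a \<in> A"
  shows "(tail ends (orient D s) (star_edge b a), head ends (orient D s) (star_edge b a)) =
    (if star_out D b (s b) a then (b, a) else (a, b))"
proof -
  have "star_edge b a \<in> star_edges"
    unfolding star_edges_def using a b by auto
  moreover have "ends (star_edge b a) = (a, b) \<or> ends (star_edge b a) = (b, a)"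
    using star_edge[OF a b] by blast
  ultimately show ?thesis
    using A_neq_B[OF a b] a b disjoint_A_B
    unfolding orient_def tail_def head_def B_end_def A_end_def by auto
qed

definition star_flow :: "('e \<Rightarrow> bool) \<Rightarrow> 'a \<Rightarrow> 'a \<Rightarrow> 'a \<Rightarrow> int" where
  "star_flow D b s a = (if star_out D b s a then -1 else 1)"

lemma net_out_star_edge:
  assumes b: "b \<in> B" and a: "a \<in> A"
  shows "net_out ends (orient D s) v (star_edge b a) =
    (if v = b then - star_flow D b (s b) a else if v = a then star_flow D b (s b) a else 0)"
  using arc_star_edge[OF b a, of D s] A_neq_B[OF a b] unfolding net_out_def star_flow_def
  by (auto split: if_splits)

lemma net_split:
  "net D s v = rest_net D v + (\<Sum>b\<in>B. \<Sum>a\<in>A. net_out ends (orient D s) v (star_edge b a))"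
proof -
  have "finite star_edges" "rest_edges \<union> star_edges = E" "rest_edges \<inter> star_edges = {}"
    using star_edges_subset finite_E finite_subset unfolding rest_edges_def by auto
  then have "net D s v = rest_net (orient D s) v + net_outdeg star_edges ends (orient D s) v"
    unfolding net_outdeg_def using finite_rest_edges by (metis sum.union_disjoint)
  also have "rest_net (orient D s) v = rest_net D v"
    unfolding net_outdeg_def net_out_def tail_def head_def by (simp add: orient_rest_edges)
  also have "net_outdeg star_edges ends (orient D s) v =
      (\<Sum>(b, a)\<in>B \<times> A. net_out ends (orient D s) v (star_edge b a))"
    unfolding net_outdeg_def star_edges_def by (subst sum.reindex[OF inj_on_star_edge]) (simp add: case_prod_unfold)
  finally show ?thesis
    by (simp add: sum.cartesian_product)
qed

lemma net_B:
  assumes b: "b \<in> B"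
  shows "net D s b = rest_net D b - (\<Sum>a\<in>A. star_flow D b (s b) a)"
proof -
  have "(\<Sum>a\<in>A. net_out ends (orient D s) b (star_edge b' a)) =
      (if b' = b then - (\<Sum>a\<in>A. star_flow D b (s b) a) else 0)" if "b' \<in> B" for b'
  proof (cases "b' = b")
    case True
    then show ?thesis using net_out_star_edge[OF that] by (simp add: sum_negf)
  next
    case False
    have "net_out ends (orient D s) b (star_edge b' a) = 0" if "a \<in> A" for a
      using net_out_star_edge[OF \<open>b' \<in> B\<close> that] A_neq_B[OF that b] False by auto
    then show ?thesis using False by simp
  qed
  then show ?thesis
    using net_split[of D s b] b finite_B by simp
qed

lemma net_A:
  assumes a: "a \<in> A"
  shows "net D s a = rest_net D a + (\<Sum>b\<in>B. star_flow D b (s b) a)"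
proof -
  have "(\<Sum>a'\<in>A. net_out ends (orient D s) a (star_edge b a')) = star_flow D b (s b) a" if "b \<in> B" for b
  proof -
    have "(\<Sum>a'\<in>A. net_out ends (orient D s) a (star_edge b a')) =
        (\<Sum>a'\<in>A. if a' = a then star_flow D b (s b) a else 0)"
      using net_out_star_edge[OF that] A_neq_B[OF a that] by (intro sum.cong) auto
    then show ?thesis
      using a finite_A by simp
  qed
  then show ?thesis
    using net_split[of D s a] by simp
qed

lemma residue_sign_cases: "residue_sign D b = 1 \<or> residue_sign D b = -1"
  unfolding residue_sign_def by simp

lemma star_flow_unbalanced:
  "c \<in> unbalanced D \<Longrightarrow> star_flow D c x a = (if a = x then residue_sign D c else - residue_sign D c)"
  unfolding star_flow_def star_out_def residue_sign_def by auto

lemma net_mod_B: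
  assumes b: "b \<in> B" and s: "s b \<in> A"
  shows "net D s b mod 3 = \<beta> b mod 3"
proof (cases "b \<in> unbalanced D")
  case True
  have "s b = a0 \<or> s b = a1 \<or> s b = a2"
    using s A_eq by blast
  then have "(\<Sum>a\<in>A. star_flow D b (s b) a) = - residue_sign D b"
    using distinct_A unfolding sum_A star_flow_unbalanced[OF True] by auto
  with True show ?thesis
    using net_B[OF b] mod3_unit_correction[of "\<beta> b - rest_net D b" "\<beta> b"]
    unfolding unbalanced_def residue_sign_def by simp
next
  case False
  then have "(\<Sum>a\<in>A. star_flow D b (s b) a) = 3 * star_flow D b (s b) a0"
    unfolding sum_A star_flow_def star_out_def by simp
  with False b show ?thesis
    using net_B[OF b] mod3_zero_correction[of "\<beta> b - rest_net D b" "\<beta> b"]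
    unfolding unbalanced_def by simp
qed

text \<open>The net out-degrees sum to zero, as do the values of \<open>\<beta>\<close> modulo 3, so the condition
  at a2 follows from the conditions at all other vertices.\<close>

lemma net_mod_if_net_mod_a0_a1:
  assumes s: "\<And>b. b \<in> B \<Longrightarrow> s b \<in> A"
    and a0: "net D s a0 mod 3 = \<beta> a0 mod 3" and a1: "net D s a1 mod 3 = \<beta> a1 mod 3"
    and v: "v \<in> V"
  shows "net D s v mod 3 = \<beta> v mod 3"
proof -
  let ?f = "\<lambda>v. net D s v - \<beta> v"
  have others: "3 dvd ?f v" if "v \<in> V - {a2}" for v
  proof -
    have "v \<in> B \<or> v = a0 \<or> v = a1"
      using that Un_A_B A_eq by blast
    then show ?thesis
      using net_mod_B[of v s D] s a0 a1 by (auto simp: mod_eq_dvd_iff)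
  qed
  have "a2 \<in> V"
    using A_eq Un_A_B by blast
  have "(\<Sum>v\<in>V. ?f v) = - (\<Sum>v\<in>V. \<beta> v)"
    using sum_net_outdeg_eq_0[OF multigraph] by (simp add: sum_subtractf)
  then have "3 dvd (\<Sum>v\<in>V. ?f v)"
    using sum_\<beta> by (simp add: mod_0_imp_dvd)
  then have "3 dvd ?f a2 + (\<Sum>v\<in>V - {a2}. ?f v)"
    using sum.remove[OF finite_V \<open>a2 \<in> V\<close>, of ?f] by simp
  moreover have "3 dvd (\<Sum>v\<in>V - {a2}. ?f v)"
    using others by (rule dvd_sum)
  ultimately have "3 dvd ?f a2"
    by (simp add: dvd_add_left_iff)
  then show ?thesis
    using others v by (cases "v = a2") (auto simp: mod_eq_dvd_iff)
qed

lemma net_A_fun_upd: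
  assumes c: "c \<in> B" and a: "a \<in> A"
  shows "net D (s(c := x)) a = net D s a - star_flow D c (s c) a + star_flow D c x a"
proof -
  have "(\<Sum>b\<in>B. star_flow D b ((s(c := x)) b) a) =
      star_flow D c x a + (\<Sum>b\<in>B - {c}. star_flow D b (s b) a)"
    using sum.remove[OF finite_B c, of "\<lambda>b. star_flow D b ((s(c := x)) b) a"] by simp
  moreover have "(\<Sum>b\<in>B. star_flow D b (s b) a) = star_flow D c (s c) a + (\<Sum>b\<in>B - {c}. star_flow D b (s b) a)"
    using sum.remove[OF finite_B c] .
  ultimately show ?thesis
    using net_A[OF a, of D "s(c := x)"] net_A[OF a, of D s] by simp
qed

lemma net_A_fun_upd_other:
  assumes c: "c \<in> unbalanced D" and "a \<in> A" "a \<noteq> s c" "a \<noteq> x"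
  shows "net D (s(c := x)) a = net D s a"
  using assms net_A_fun_upd[of c a D s x] star_flow_unbalanced[OF c] unbalanced_subset by auto

text \<open>Redirecting the distinguished neighbours of two unbalanced vertices between a and a'
  changes the net out-degree of a by \<open>\<plusminus>2 \<plusminus> 2\<close>, which realises every residue.\<close>

lemma exists_fun_upd2_net_mod:
  assumes c1: "c1 \<in> unbalanced D" and c2: "c2 \<in> unbalanced D" and "c1 \<noteq> c2"
    and a: "a \<in> A" and "a \<noteq> a'"
  obtains x1 x2 where "x1 \<in> {a, a'}" "x2 \<in> {a, a'}"
    "net D (s(c1 := x1, c2 := x2)) a mod 3 = \<beta> a mod 3"
proof -
  define d where "d = net D s a - \<beta> a - star_flow D c1 (s c1) a - star_flow D c2 (s c2) a"
  have "\<exists>g1 g2. (d + (if g1 then residue_sign D c1 else - residue_sign D c1)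
      + (if g2 then residue_sign D c2 else - residue_sign D c2)) mod 3 = 0"
    by (rule exists_signs_sum_mod3[OF residue_sign_cases residue_sign_cases])
  then obtain g1 g2 where g: "(d + (if g1 then residue_sign D c1 else - residue_sign D c1)
      + (if g2 then residue_sign D c2 else - residue_sign D c2)) mod 3 = 0"
    by (elim exE) (rule that)
  define x1 where "x1 = (if g1 then a else a')"
  define x2 where "x2 = (if g2 then a else a')"
  have "star_flow D c1 x1 a = (if g1 then residue_sign D c1 else - residue_sign D c1)"
    "star_flow D c2 x2 a = (if g2 then residue_sign D c2 else - residue_sign D c2)"
    using \<open>a \<noteq> a'\<close> unfolding star_flow_unbalanced[OF c1] star_flow_unbalanced[OF c2] x1_def x2_def
    by simp_all
  with g have "(d + star_flow D c1 x1 a + star_flow D c2 x2 a) mod 3 = 0"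
    by (simp only:)
  moreover have "c1 \<in> B" "c2 \<in> B"
    using c1 c2 unbalanced_subset by auto
  then have "net D (s(c1 := x1, c2 := x2)) a - \<beta> a = d + star_flow D c1 x1 a + star_flow D c2 x2 a"
    using net_A_fun_upd[OF _ a, of c2 D "s(c1 := x1)" x2] net_A_fun_upd[OF _ a, of c1 D s x1] \<open>c1 \<noteq> c2\<close>
    unfolding d_def by simp
  ultimately have "3 dvd net D (s(c1 := x1, c2 := x2)) a - \<beta> a"
    by (simp add: dvd_eq_mod_eq_0)
  then show thesis
    using that[of x1 x2] unfolding x1_def x2_def by (simp add: mod_eq_dvd_iff)
qed

subsection \<open>Strong connectivity\<close>

definition hub_connected :: "('e \<Rightarrow> bool) \<Rightarrow> bool" where
  "hub_connected D \<longleftrightarrow> (\<forall>a\<in>A. (a0, a) \<in> (arcs E ends D)\<^sup>* \<and> (a, a0) \<in> (arcs E ends D)\<^sup>*)"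

lemma star_arc:
  assumes "b \<in> B" "a \<in> A"
  shows "(if star_out D b (s b) a then (b, a) else (a, b)) \<in> arcs E ends (orient D s)"
  using arc_star_edge[OF assms, of D s, symmetric] star_edge[OF assms(2,1)] unfolding arcs_def by blast

lemma rest_arc:
  assumes "e \<in> rest_edges"
  shows "(tail ends D e, head ends D e) \<in> arcs E ends (orient D s)"
proof -
  have "(tail ends (orient D s) e, head ends (orient D s) e) \<in> arcs E ends (orient D s)"
    using rest_edge_E[OF assms] unfolding arcs_def by blast
  then show ?thesis
    using orient_rest_edges[OF assms] unfolding tail_def head_def by simp
qed

lemma unbalanced_arcs:
  assumes b: "b \<in> unbalanced D" and s: "s b \<in> A"
  shows "(\<exists>a\<in>A. (a, b) \<in> arcs E ends (orient D s)) \<and> (\<exists>a\<in>A. (b, a) \<in> arcs E ends (orient D s))"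
proof -
  obtain a where a: "a \<in> A" "a \<noteq> s b"
    using A_eq distinct_A by auto
  have "b \<in> B"
    using b unbalanced_subset by blast
  have "star_out D b (s b) a \<longleftrightarrow> \<not> star_out D b (s b) (s b)"
    using b a unfolding star_out_def by simp
  then show ?thesis
    using star_arc[OF \<open>b \<in> B\<close> a(1), of D s] star_arc[OF \<open>b \<in> B\<close> s, of D s] a(1) s
    by (cases "star_out D b (s b) a") auto
qed

lemma balanced_arcs:
  assumes max: "max_unbalanced D" and b: "b \<in> B - unbalanced D"
  obtains w where "w \<in> unbalanced D"
    "(w, b) \<in> arcs E ends (orient D s) \<and> (b, a0) \<in> arcs E ends (orient D s) \<or>
     (b, w) \<in> arcs E ends (orient D s) \<and> (a0, b) \<in> arcs E ends (orient D s)"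
proof (cases "\<exists>e\<in>rest_edges. head ends D e = b")
  case True
  then obtain e where e: "e \<in> rest_edges" "head ends D e = b" by blast
  then have "incident b e" and tail: "tail ends D e = other_end b e"
    using ends_E[OF rest_edge_E[OF e(1)]] unfolding incident_def head_def tail_def other_end_def
    by (auto split: if_splits)
  then have "other_end b e \<in> unbalanced D"
    using balanced_rest_neighbour[OF max b e(1)] by blast
  moreover have "(other_end b e, b) \<in> arcs E ends (orient D s)"
    using rest_arc[OF e(1), of D s] unfolding tail e(2) .
  moreover have "star_out D b (s b) a0"
    using b True unfolding star_out_def by simp
  then have "(b, a0) \<in> arcs E ends (orient D s)"
    using star_arc[of b a0 D s] b in_A by simp
  ultimately show thesis
    using that by blast
next
  case False
  obtain e where e: "e \<in> rest_edges" "incident b e"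
    using rest_edge_at_B b by blast
  with False have tail: "tail ends D e = b" and head: "head ends D e = other_end b e"
    using ends_E[OF rest_edge_E[OF e(1)]] unfolding incident_def head_def tail_def other_end_def
    by (auto split: if_splits)
  have "other_end b e \<in> unbalanced D"
    using balanced_rest_neighbour[OF max b e] by blast
  moreover have "(b, other_end b e) \<in> arcs E ends (orient D s)"
    using rest_arc[OF e(1), of D s] unfolding tail head .
  moreover have "\<not> star_out D b (s b) a0"
    using b False unfolding star_out_def by simp
  then have "(a0, b) \<in> arcs E ends (orient D s)"
    using star_arc[of b a0 D s] b in_A by simp
  ultimately show thesis
    using that by blast
qed

lemma strongly_connected_if_hub_connected:
  assumes max: "max_unbalanced D" and s: "\<And>b. b \<in> B \<Longrightarrow> s b \<in> A"
    and hub: "hub_connected (orient D s)"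
  shows "strongly_connected_orient V E ends (orient D s)"
proof -
  let ?R = "arcs E ends (orient D s)"
  have via_unbalanced: "(a0, b) \<in> ?R\<^sup>* \<and> (b, a0) \<in> ?R\<^sup>*" if b: "b \<in> unbalanced D" for b
  proof -
    have "s b \<in> A"
      using s b unbalanced_subset by blast
    then obtain x y where "x \<in> A" "(x, b) \<in> ?R" "y \<in> A" "(b, y) \<in> ?R"
      using unbalanced_arcs[OF b] by blast
    with hub show ?thesis
      unfolding hub_connected_def by (meson rtrancl.rtrancl_into_rtrancl converse_rtrancl_into_rtrancl)
  qed
  have "(a0, v) \<in> ?R\<^sup>* \<and> (v, a0) \<in> ?R\<^sup>*" if v: "v \<in> V" for v
  proof -
    consider "v \<in> A" | "v \<in> unbalanced D" | "v \<in> B - unbalanced D"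
      using v Un_A_B by blast
    then show ?thesis
    proof cases
      case 3
      then obtain w where "w \<in> unbalanced D"
        "(w, v) \<in> ?R \<and> (v, a0) \<in> ?R \<or> (v, w) \<in> ?R \<and> (a0, v) \<in> ?R"
        using balanced_arcs[OF max] by blast
      with via_unbalanced[of w] show ?thesis
        by (meson rtrancl.rtrancl_into_rtrancl converse_rtrancl_into_rtrancl r_into_rtrancl)
    qed (use hub via_unbalanced in \<open>auto simp: hub_connected_def\<close>)
  qed
  then show ?thesis
    unfolding strongly_connected_orient_def by (meson rtrancl_trans)
qed

lemma unbalanced_bridge:
  assumes b: "b \<in> unbalanced D" and s: "s b \<in> A" and a: "a \<in> A" "a \<noteq> s b"
  shows "(if residue_sign D b = 1 then (s b, a) else (a, s b)) \<in> (arcs E ends (orient D s))\<^sup>*"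
proof -
  let ?R = "arcs E ends (orient D s)"
  have "b \<in> B"
    using b unbalanced_subset by blast
  note arcs = star_arc[OF this s, of D s] star_arc[OF this a(1), of D s]
  show ?thesis
  proof (cases "residue_sign D b = 1")
    case True
    then have "(s b, b) \<in> ?R" "(b, a) \<in> ?R"
      using arcs b a(2) unfolding star_out_def by auto
    with True show ?thesis by simp
  next
    case False
    then have "(a, b) \<in> ?R" "(b, s b) \<in> ?R"
      using arcs b a(2) unfolding star_out_def by auto
    with False show ?thesis by simp
  qed
qed

lemma hub_connected_opposite_signs:
  assumes p: "p \<in> unbalanced D" "residue_sign D p = 1" "s p = a0"
    and q: "q \<in> unbalanced D" "residue_sign D q = -1" "s q = a0"
  shows "hub_connected (orient D s)"
  unfolding hub_connected_def
proof
  fix a assume a: "a \<in> A"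
  show "(a0, a) \<in> (arcs E ends (orient D s))\<^sup>* \<and> (a, a0) \<in> (arcs E ends (orient D s))\<^sup>*"
  proof (cases "a = a0")
    case False
    with unbalanced_bridge[OF p(1) _ a, of s] unbalanced_bridge[OF q(1) _ a, of s] p q in_A show ?thesis
      by simp
  qed simp
qed

lemma hub_connected_equal_signs:
  assumes "p0 \<in> unbalanced D" "p1 \<in> unbalanced D" "p2 \<in> unbalanced D"
    and "residue_sign D p1 = residue_sign D p0" "residue_sign D p2 = residue_sign D p0"
    and "s p0 = a0" "s p1 = a1" "s p2 = a2"
  shows "hub_connected (orient D s)"
proof -
  let ?R = "(arcs E ends (orient D s))\<^sup>*" and ?\<sigma> = "residue_sign D p0"
  have arcs: "(if ?\<sigma> = 1 then (a0, a1) else (a1, a0)) \<in> ?R" "(if ?\<sigma> = 1 then (a0, a2) else (a2, a0)) \<in> ?R"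
    "(if ?\<sigma> = 1 then (a1, a0) else (a0, a1)) \<in> ?R" "(if ?\<sigma> = 1 then (a2, a0) else (a0, a2)) \<in> ?R"
    using unbalanced_bridge[OF assms(1)] unbalanced_bridge[OF assms(2)] unbalanced_bridge[OF assms(3)]
      assms(4-8) in_A distinct_A by auto
  show ?thesis
    unfolding hub_connected_def
  proof
    fix a assume "a \<in> A"
    then have "a = a0 \<or> a = a1 \<or> a = a2"
      using A_eq by blast
    with arcs show "(a0, a) \<in> ?R \<and> (a, a0) \<in> ?R"
      by (cases "?\<sigma> = 1") auto
  qed
qed

lemma exists_hub_choice:
  assumes "3 \<le> card (unbalanced D)"
  obtains H h where "H \<subseteq> unbalanced D" "card H \<le> 3" "\<And>b. b \<in> H \<Longrightarrow> h b \<in> A"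
    "\<And>s. (\<And>b. b \<in> H \<Longrightarrow> s b = h b) \<Longrightarrow> hub_connected (orient D s)"
proof (cases "\<exists>p\<in>unbalanced D. \<exists>q\<in>unbalanced D. residue_sign D p = 1 \<and> residue_sign D q = -1")
  case True
  then obtain p q where "p \<in> unbalanced D" "q \<in> unbalanced D" "residue_sign D p = 1" "residue_sign D q = -1"
    by blast
  with hub_connected_opposite_signs[of p D _ q] in_A show thesis
    using that[of "{p, q}" "\<lambda>_. a0"] by (simp add: card_insert_if)
next
  case False
  obtain P where P: "P \<subseteq> unbalanced D" "card P = 3"
    using obtain_subset_with_card_n[OF assms] by blast
  then obtain p0 p1 p2 where p: "P = {p0, p1, p2}" "distinct [p0, p1, p2]"
    unfolding card_3_iff by auto
  with P False have "residue_sign D p1 = residue_sign D p0" "residue_sign D p2 = residue_sign D p0"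
    using residue_sign_cases[of D p0] residue_sign_cases[of D p1] residue_sign_cases[of D p2] by auto
  with hub_connected_equal_signs[of p0 D p1 p2] P p in_A show thesis
    using that[of P "\<lambda>b. if b = p0 then a0 else if b = p1 then a1 else a2"] by auto
qed

text \<open>Four further unbalanced vertices: c1, c2 move between a0 and a2 to fix the residue at a0, then
  c3, c4 move between a1 and a2 to fix the residue at a1 without disturbing a0.\<close>

lemma exists_choice_net_mod_a0_a1:
  assumes c: "{c1, c2, c3, c4} \<subseteq> unbalanced D" "distinct [c1, c2, c3, c4]"
    and s0: "\<And>b. b \<in> B \<Longrightarrow> s0 b \<in> A" and s0_c: "s0 c3 = a2" "s0 c4 = a2"
  obtains s where "\<And>b. b \<in> B \<Longrightarrow> s b \<in> A" "\<And>b. b \<notin> {c1, c2, c3, c4} \<Longrightarrow> s b = s0 b"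
    "net D s a0 mod 3 = \<beta> a0 mod 3" "net D s a1 mod 3 = \<beta> a1 mod 3"
proof -
  obtain x1 x2 where x12: "x1 \<in> {a0, a2}" "x2 \<in> {a0, a2}"
    and net_a0: "net D (s0(c1 := x1, c2 := x2)) a0 mod 3 = \<beta> a0 mod 3"
    using exists_fun_upd2_net_mod[of c1 D c2 a0 a2] c in_A distinct_A by auto
  define s1 where "s1 = s0(c1 := x1, c2 := x2)"
  obtain x3 x4 where x34: "x3 \<in> {a1, a2}" "x4 \<in> {a1, a2}"
    and net_a1: "net D (s1(c3 := x3, c4 := x4)) a1 mod 3 = \<beta> a1 mod 3"
    using exists_fun_upd2_net_mod[of c3 D c4 a1 a2] c in_A distinct_A by auto
  define s where "s = s1(c3 := x3, c4 := x4)"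
  have "s1 c3 = a2" "s1 c4 = a2"
    using s0_c c(2) unfolding s1_def by auto
  then have "net D s a0 = net D s1 a0"
    using net_A_fun_upd_other[of c4 D a0 "s1(c3 := x3)" x4] net_A_fun_upd_other[of c3 D a0 s1 x3]
      c x34 in_A distinct_A unfolding s_def by auto
  moreover have "b \<in> B \<Longrightarrow> s b \<in> A" for b
    using s0 x12 x34 in_A unfolding s_def s1_def by auto
  ultimately show thesis
    using that[of s] net_a0 net_a1 unfolding s_def s1_def by auto
qed

theorem exists_orientation_net_mod:
  "\<exists>D. strongly_connected_orient V E ends D \<and> (\<forall>v\<in>V. net_outdeg E ends D v mod 3 = \<beta> v mod 3)"
proof -
  obtain D where max: "max_unbalanced D"
    using exists_max_unbalanced by blast
  have "14 \<le> 2 * card (unbalanced D)"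
    using card_B card_B_le_twice_unbalanced[OF max] by (rule le_trans)
  then have "7 \<le> card (unbalanced D)" "3 \<le> card (unbalanced D)"
    by simp_all
  obtain H h where H: "H \<subseteq> unbalanced D" "card H \<le> 3" "\<And>b. b \<in> H \<Longrightarrow> h b \<in> A"
    and hub: "\<And>s. (\<And>b. b \<in> H \<Longrightarrow> s b = h b) \<Longrightarrow> hub_connected (orient D s)"
    using exists_hub_choice[OF \<open>3 \<le> card (unbalanced D)\<close>] by blast
  have "4 \<le> card (unbalanced D - H)"
    using \<open>7 \<le> card (unbalanced D)\<close> H(1,2) card_Diff_subset[OF finite_subset[OF H(1) finite_unbalanced] H(1)]
    by linarith
  then obtain c1 c2 c3 c4 where c: "{c1, c2, c3, c4} \<subseteq> unbalanced D - H" "distinct [c1, c2, c3, c4]"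
    by (rule obtain_4_distinct)
  define s0 where "s0 b = (if b \<in> H then h b else a2)" for b
  have "{c1, c2, c3, c4} \<subseteq> unbalanced D" "\<And>b. b \<in> B \<Longrightarrow> s0 b \<in> A" "s0 c3 = a2" "s0 c4 = a2"
    using c H(3) in_A unfolding s0_def by auto
  then obtain s where s: "\<And>b. b \<in> B \<Longrightarrow> s b \<in> A" "\<And>b. b \<notin> {c1, c2, c3, c4} \<Longrightarrow> s b = s0 b"
    "net D s a0 mod 3 = \<beta> a0 mod 3" "net D s a1 mod 3 = \<beta> a1 mod 3"
    using exists_choice_net_mod_a0_a1[OF _ c(2)] by blast
  have "hub_connected (orient D s)"
  proof (rule hub)
    fix b assume "b \<in> H"
    with c(1) have "b \<notin> {c1, c2, c3, c4}" by blast
    with s(2) \<open>b \<in> H\<close> show "s b = h b" unfolding s0_def by simp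
  qed
  then have "strongly_connected_orient V E ends (orient D s)"
    using strongly_connected_if_hub_connected[of D s] max s(1) by blast
  moreover have "\<forall>v\<in>V. net D s v mod 3 = \<beta> v mod 3"
    using net_mod_if_net_mod_a0_a1[of s D] s(1,3,4) by blast
  ultimately show ?thesis
    by blast
qed

end

theorem mainTheorem13:
  fixes t :: nat and V :: "'a set" and E :: "'e set" and ends :: "'e \<Rightarrow> 'a \<times> 'a"
  assumes "t \<ge> 14"
    and "is_K3t_plus t V E ends"
  shows "in_S3 V E ends"
proof -
  obtain A B where AB: "A \<inter> B = {}" "A \<union> B = V" "card A = 3" "card B = t"
    and complete: "\<forall>a\<in>A. \<forall>b\<in>B. \<exists>e\<in>E. ends e = (a, b) \<or> ends e = (b, a)"
    using assms(2) unfolding is_K3t_plus_def contains_spanning_K3t_def by blast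
  obtain a0 a1 a2 where A: "A = {a0, a1, a2}" "distinct [a0, a1, a2]"
    using AB(3) unfolding card_3_iff by auto
  have mg: "multigraph V E ends" and ec: "edge_connected 4 V E ends"
    using assms(2) unfolding is_K3t_plus_def by auto
  show ?thesis
    unfolding in_S3_def
  proof (intro allI impI)
    fix \<beta> :: "'a \<Rightarrow> int"
    assume "(\<Sum>v\<in>V. \<beta> v) mod 3 = 0"
    then interpret K3t_boundary V E ends A B a0 a1 a2 \<beta>
      using mg degree_ge_if_edge_connected[OF ec] AB A complete assms(1) by unfold_locales auto
    show "\<exists>D. strongly_connected_orient V E ends D \<and>
        (\<forall>v\<in>V. (int (outdeg E ends D v) - int (indeg E ends D v)) mod 3 = \<beta> v mod 3)"
      using exists_orientation_net_mod net_outdeg_eq_outdeg_minus_indeg[OF finite_E] by metis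
  qed
qed

end
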